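(* Let $R$ be a ring, $E$ a simple left $R$-module and $D$ any left $R$-module. Then $E$ (identified with $E\oplus 0$) is strongly hollow in $E\oplus D$ if and only if $E\notin\sigma[D]$.
   Context: A submodule $N$ of $M$ is strongly hollow in $M$ if for all submodules $K,L$ of $M$, $N\subseteq K+L$ implies $N\subseteq K$ or $N\subseteq L$. $\sigma[D]$ denotes the full subcategory of left $R$-modules consisting of submodules of factor modules of direct sums of copies of $D$ (for simple $E$: $E\in\sigma[D]$ iff $\mathrm{Hom}_R(E,D/A)\neq0$ for some submodule $A$ of $D$). *)

theory Defs
  imports "HOL-Algebra.Module"
begin

text \<open>Left modules over an arbitrary (not necessarily commutative) unital ring R:
  the axioms of the library locale module, but with only ring R instead of cring R.\<close>
definition left_module :: "('a, 'r) ring_scheme \<Rightarrow> ('a, 'b, 'm) module_scheme \<Rightarrow> bool" where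
  "left_module R M \<longleftrightarrow> ring R \<and> abelian_group M \<and> module_axioms R M"

definition simple_module :: "('a, 'r) ring_scheme \<Rightarrow> ('a, 'b, 'm) module_scheme \<Rightarrow> bool" where
  "simple_module R M \<longleftrightarrow> left_module R M \<and> carrier M \<noteq> {\<zero>\<^bsub>M\<^esub>} \<and>
     (\<forall>N. submodule N R M \<longrightarrow> N = {\<zero>\<^bsub>M\<^esub>} \<or> N = carrier M)"

definition submod_sum :: "('a, 'b, 'm) module_scheme \<Rightarrow> 'b set \<Rightarrow> 'b set \<Rightarrow> 'b set" where
  "submod_sum M K L = {k \<oplus>\<^bsub>M\<^esub> l | k l. k \<in> K \<and> l \<in> L}"

definition strongly_hollow ::
    "('a, 'r) ring_scheme \<Rightarrow> ('a, 'b, 'm) module_scheme \<Rightarrow> 'b set \<Rightarrow> bool" where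
  "strongly_hollow R M N \<longleftrightarrow>
     (\<forall>K L. submodule K R M \<longrightarrow> submodule L R M \<longrightarrow>
        N \<subseteq> submod_sum M K L \<longrightarrow> N \<subseteq> K \<or> N \<subseteq> L)"

text \<open>External direct sum E \<oplus> D (ring multiplication/one fields are irrelevant).\<close>
definition dsum :: "('a, 'b) module \<Rightarrow> ('a, 'c) module \<Rightarrow> ('a, 'b \<times> 'c) module" where
  "dsum E D = \<lparr>carrier = carrier E \<times> carrier D, mult = (\<lambda>_ _. undefined), one = undefined,
     zero = (\<zero>\<^bsub>E\<^esub>, \<zero>\<^bsub>D\<^esub>),
     add = (\<lambda>(a, b) (c, d). (a \<oplus>\<^bsub>E\<^esub> c, b \<oplus>\<^bsub>D\<^esub> d)),
     smult = (\<lambda>r (a, b). (r \<odot>\<^bsub>E\<^esub> a, r \<odot>\<^bsub>D\<^esub> b))\<rparr>"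

definition quot_module :: "('a, 'b) module \<Rightarrow> 'b set \<Rightarrow> ('a, 'b set) module" where
  "quot_module D A = \<lparr>carrier = {{a \<oplus>\<^bsub>D\<^esub> x | a. a \<in> A} | x. x \<in> carrier D}, mult = (\<lambda>_ _. undefined), one = undefined,
     zero = A,
     add = (\<lambda>X Y. {x \<oplus>\<^bsub>D\<^esub> y | x y. x \<in> X \<and> y \<in> Y}),
     smult = (\<lambda>r X. {a \<oplus>\<^bsub>D\<^esub> (r \<odot>\<^bsub>D\<^esub> x) | a x. a \<in> A \<and> x \<in> X})\<rparr>"

definition lin_hom :: "('a, 'r) ring_scheme \<Rightarrow> ('a, 'b) module \<Rightarrow> ('a, 'c) module \<Rightarrow> ('b \<Rightarrow> 'c) \<Rightarrow> bool" where
  "lin_hom R M N f \<longleftrightarrow> f \<in> carrier M \<rightarrow> carrier N \<and>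
     (\<forall>x\<in>carrier M. \<forall>y\<in>carrier M. f (x \<oplus>\<^bsub>M\<^esub> y) = f x \<oplus>\<^bsub>N\<^esub> f y) \<and>
     (\<forall>r\<in>carrier R. \<forall>x\<in>carrier M. f (r \<odot>\<^bsub>M\<^esub> x) = r \<odot>\<^bsub>N\<^esub> f x)"

text \<open>For simple E: E \<in> \<sigma>[D] iff Hom_R(E, D/A) \<noteq> 0 for some submodule A of D.\<close>
definition simple_in_sigma :: "('a, 'r) ring_scheme \<Rightarrow> ('a, 'c) module \<Rightarrow> ('a, 'b) module \<Rightarrow> bool" where
  "simple_in_sigma R D E \<longleftrightarrow>
     (\<exists>A f. submodule A R D \<and> lin_hom R E (quot_module D A) f \<and>
        (\<exists>x\<in>carrier E. f x \<noteq> \<zero>\<^bsub>quot_module D A\<^esub>))"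

end

theory Submission
  imports Defs "HOL-Algebra.AbelCoset"
begin

text \<open>
  If some Hom(E, D/A) contains f \<noteq> 0, the graph K = {(x, d). d \<in> f x} and L = 0 \<oplus> D are
  submodules with E \<oplus> 0 \<subseteq> K + L; neither contains E \<oplus> 0, since (x, 0) \<in> K means f x = 0.
  Conversely, let E \<oplus> 0 \<subseteq> K + L with E \<oplus> 0 contained in neither. Simplicity of E forces
  K and L to meet E \<oplus> 0 trivially. Writing (x, 0) = k + l, the class of the D-component of l
  modulo A = snd ` (K \<inter> L) does not depend on the decomposition and is R-linear in x;
  it vanishes only when (x, 0) \<in> K, so it is a nonzero element of Hom(E, D/A).
\<close>

text \<open>The library locale module requires a commutative ring; this is the same notion over an
  arbitrary ring.\<close>

locale lmodule = R?: ring R + M?: abelian_group M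
  for R :: "('a, 'r) ring_scheme" (structure) and M :: "('a, 'b) module" (structure) +
  assumes smult_closed [simp, intro]:
      "\<lbrakk>a \<in> carrier R; x \<in> carrier M\<rbrakk> \<Longrightarrow> a \<odot>\<^bsub>M\<^esub> x \<in> carrier M"
    and smult_l_distr:
      "\<lbrakk>a \<in> carrier R; b \<in> carrier R; x \<in> carrier M\<rbrakk> \<Longrightarrow>
      (a \<oplus> b) \<odot>\<^bsub>M\<^esub> x = a \<odot>\<^bsub>M\<^esub> x \<oplus>\<^bsub>M\<^esub> b \<odot>\<^bsub>M\<^esub> x"
    and smult_r_distr:
      "\<lbrakk>a \<in> carrier R; x \<in> carrier M; y \<in> carrier M\<rbrakk> \<Longrightarrow>
      a \<odot>\<^bsub>M\<^esub> (x \<oplus>\<^bsub>M\<^esub> y) = a \<odot>\<^bsub>M\<^esub> x \<oplus>\<^bsub>M\<^esub> a \<odot>\<^bsub>M\<^esub> y"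
    and smult_assoc1:
      "\<lbrakk>a \<in> carrier R; b \<in> carrier R; x \<in> carrier M\<rbrakk> \<Longrightarrow>
      (a \<otimes> b) \<odot>\<^bsub>M\<^esub> x = a \<odot>\<^bsub>M\<^esub> (b \<odot>\<^bsub>M\<^esub> x)"
    and smult_one [simp]: "x \<in> carrier M \<Longrightarrow> \<one> \<odot>\<^bsub>M\<^esub> x = x"

lemma left_module_imp_lmodule: "left_module R M \<Longrightarrow> lmodule R M"
  unfolding left_module_def module_axioms_def lmodule_def lmodule_axioms_def by auto

lemma quot_module_carrier: "carrier (quot_module M A) = a_rcosets\<^bsub>M\<^esub> A"
  by (auto simp: quot_module_def A_RCOSETS_def' a_r_coset_def')

lemma quot_module_zero [simp]: "\<zero>\<^bsub>quot_module M A\<^esub> = A"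
  by (simp add: quot_module_def)

context lmodule
begin

lemma smult_l_null [simp]: "x \<in> carrier M \<Longrightarrow> \<zero> \<odot>\<^bsub>M\<^esub> x = \<zero>\<^bsub>M\<^esub>"
  by (metis M.add.r_cancel_one' R.add.l_one R.zero_closed smult_closed smult_l_distr)

lemma smult_r_null [simp]: "a \<in> carrier R \<Longrightarrow> a \<odot>\<^bsub>M\<^esub> \<zero>\<^bsub>M\<^esub> = \<zero>\<^bsub>M\<^esub>"
  by (metis M.l_zero M.add.r_cancel_one' M.zero_closed smult_closed smult_r_distr)

lemma smult_l_minus:
  "\<lbrakk>a \<in> carrier R; x \<in> carrier M\<rbrakk> \<Longrightarrow> (\<ominus> a) \<odot>\<^bsub>M\<^esub> x = \<ominus>\<^bsub>M\<^esub> (a \<odot>\<^bsub>M\<^esub> x)"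
  by (metis M.minus_equality R.a_inv_closed R.l_neg smult_closed smult_l_distr smult_l_null)

lemma smult_r_minus:
  "\<lbrakk>a \<in> carrier R; x \<in> carrier M\<rbrakk> \<Longrightarrow> a \<odot>\<^bsub>M\<^esub> (\<ominus>\<^bsub>M\<^esub> x) = \<ominus>\<^bsub>M\<^esub> (a \<odot>\<^bsub>M\<^esub> x)"
  by (metis M.a_inv_closed M.l_neg M.minus_equality smult_closed smult_r_distr smult_r_null)

lemma submoduleI:
  assumes "H \<subseteq> carrier M" and "\<zero>\<^bsub>M\<^esub> \<in> H"
    and "\<And>a b. \<lbrakk>a \<in> H; b \<in> H\<rbrakk> \<Longrightarrow> a \<oplus>\<^bsub>M\<^esub> b \<in> H"
    and "\<And>r a. \<lbrakk>r \<in> carrier R; a \<in> H\<rbrakk> \<Longrightarrow> r \<odot>\<^bsub>M\<^esub> a \<in> H"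
  shows "submodule H R M"
proof -
  have "\<ominus>\<^bsub>M\<^esub> a \<in> H" if "a \<in> H" for a
    using assms(4)[of "\<ominus> \<one>" a] that assms(1) smult_l_minus[of \<one> a] by auto
  then show ?thesis
    using assms unfolding submodule_def subgroup_def submodule_axioms_def a_inv_def by auto
qed

lemma submodule_additive_subgroup: "submodule H R M \<Longrightarrow> additive_subgroup H M"
  by (intro additive_subgroup.intro submodule.axioms(1))

lemma submodule_abelian_subgroup: "submodule H R M \<Longrightarrow> abelian_subgroup H M"
  by (intro abelian_subgroupI3 submodule_additive_subgroup M.abelian_group_axioms)

lemma submodule_subset: "submodule H R M \<Longrightarrow> H \<subseteq> carrier M"
  by (rule additive_subgroup.a_subset[OF submodule_additive_subgroup])

lemma submodule_minus_closed:
  assumes "submodule H R M" and "a \<in> H" and "b \<in> H"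
  shows "a \<ominus>\<^bsub>M\<^esub> b \<in> H"
  using assms additive_subgroup.a_closed additive_subgroup.a_inv_closed submodule_additive_subgroup
  by (metis a_minus_def)

lemma submod_sum_subset:
  assumes "submodule K R M" and "submodule L R M"
  shows "submod_sum M K L \<subseteq> carrier M"
  using submodule_subset[OF assms(1)] submodule_subset[OF assms(2)]
  by (auto simp: submod_sum_def)

lemma submod_sumE:
  assumes "u \<in> submod_sum M K L" and "submodule K R M" and "submodule L R M"
  obtains l where "l \<in> L" and "u \<ominus>\<^bsub>M\<^esub> l \<in> K"
proof -
  obtain k l where kl: "k \<in> K" "l \<in> L" "u = k \<oplus>\<^bsub>M\<^esub> l"
    using assms(1) by (auto simp: submod_sum_def)
  moreover have "k \<in> carrier M" and "l \<in> carrier M"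
    using kl assms(2,3) submodule_subset by blast+
  ultimately have "u \<ominus>\<^bsub>M\<^esub> l = k"
    by (simp add: a_minus_def M.a_assoc M.r_neg)
  then show ?thesis
    using that kl by simp
qed

context
  fixes A assumes A: "submodule A R M"
begin

interpretation A: abelian_subgroup A M
  using A by (rule submodule_abelian_subgroup)

lemma quot_module_add_rcos:
  assumes "x \<in> carrier M" and "y \<in> carrier M"
  shows "(A +>\<^bsub>M\<^esub> x) \<oplus>\<^bsub>quot_module M A\<^esub> (A +>\<^bsub>M\<^esub> y) = A +>\<^bsub>M\<^esub> (x \<oplus>\<^bsub>M\<^esub> y)"
proof -
  have "(A +>\<^bsub>M\<^esub> x) \<oplus>\<^bsub>quot_module M A\<^esub> (A +>\<^bsub>M\<^esub> y) = (A +>\<^bsub>M\<^esub> x) <+>\<^bsub>M\<^esub> (A +>\<^bsub>M\<^esub> y)"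
    by (auto simp: quot_module_def set_add_def')
  then show ?thesis
    using A.a_rcos_sum[OF assms] by simp
qed

lemma quot_module_smult_rcos:
  assumes r: "r \<in> carrier R" and x: "x \<in> carrier M"
  shows "r \<odot>\<^bsub>quot_module M A\<^esub> (A +>\<^bsub>M\<^esub> x) = A +>\<^bsub>M\<^esub> (r \<odot>\<^bsub>M\<^esub> x)"
proof -
  have "a \<oplus>\<^bsub>M\<^esub> r \<odot>\<^bsub>M\<^esub> (h \<oplus>\<^bsub>M\<^esub> x) \<in> A +>\<^bsub>M\<^esub> (r \<odot>\<^bsub>M\<^esub> x)" if "a \<in> A" "h \<in> A" for a h
  proof -
    have "a \<oplus>\<^bsub>M\<^esub> r \<odot>\<^bsub>M\<^esub> (h \<oplus>\<^bsub>M\<^esub> x) = (a \<oplus>\<^bsub>M\<^esub> r \<odot>\<^bsub>M\<^esub> h) \<oplus>\<^bsub>M\<^esub> r \<odot>\<^bsub>M\<^esub> x"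
      using that r x by (simp add: smult_r_distr M.a_ac)
    moreover have "a \<oplus>\<^bsub>M\<^esub> r \<odot>\<^bsub>M\<^esub> h \<in> A"
      using that r A by (simp add: submodule.smult_closed)
    ultimately show ?thesis
      using M.a_rcosI[OF _ A.a_subset smult_closed[OF r x]] by simp
  qed
  then have "r \<odot>\<^bsub>quot_module M A\<^esub> (A +>\<^bsub>M\<^esub> x) \<subseteq> A +>\<^bsub>M\<^esub> (r \<odot>\<^bsub>M\<^esub> x)"
    by (auto simp: quot_module_def a_r_coset_def')
  moreover have "A +>\<^bsub>M\<^esub> (r \<odot>\<^bsub>M\<^esub> x) \<subseteq> r \<odot>\<^bsub>quot_module M A\<^esub> (A +>\<^bsub>M\<^esub> x)"
    using A.a_rcos_self[OF x] by (auto simp: quot_module_def a_r_coset_def')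
  ultimately show ?thesis
    by (rule subset_antisym)
qed

lemma rcos_self: "x \<in> carrier M \<Longrightarrow> x \<in> A +>\<^bsub>M\<^esub> x"
  by (rule A.a_rcos_self)

lemma rcos_zero [simp]: "A +>\<^bsub>M\<^esub> \<zero>\<^bsub>M\<^esub> = A"
  by (rule A.a_rcos_const[OF A.zero_closed])

lemma quot_module_elemE:
  assumes "X \<in> carrier (quot_module M A)"
  obtains d where "d \<in> carrier M" and "X = A +>\<^bsub>M\<^esub> d"
  using assms by (auto simp: quot_module_carrier A_RCOSETS_def')

lemma quot_module_elem_subset: "X \<in> carrier (quot_module M A) \<Longrightarrow> X \<subseteq> carrier M"
  by (simp add: quot_module_carrier A.a_rcosets_carrier)

lemma quot_module_elem_eq_rcos:
  assumes "X \<in> carrier (quot_module M A)" and "d \<in> X"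
  shows "X = A +>\<^bsub>M\<^esub> d"
  using assms A.a_repr_independence' by (auto simp: quot_module_carrier A_RCOSETS_def')

lemma quot_module_elem_eq_zero_iff:
  assumes "X \<in> carrier (quot_module M A)"
  shows "X = A \<longleftrightarrow> \<zero>\<^bsub>M\<^esub> \<in> X"
  using quot_module_elem_eq_rcos[OF assms, of "\<zero>\<^bsub>M\<^esub>"] A.zero_closed by auto

end

lemma submodule_Int:
  assumes "submodule K R M" and "submodule L R M"
  shows "submodule (K \<inter> L) R M"
  using assms by (intro submoduleI) (auto simp: submodule_def submodule_axioms_def subgroup_def)

end

lemma (in abelian_group) summands_eq_rcos:
  assumes K: "additive_subgroup K G" and L: "additive_subgroup L G"
    and u: "u \<in> carrier G" and l: "l \<in> L" and ul: "u \<ominus> l \<in> K"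
  shows "{l' \<in> L. u \<ominus> l' \<in> K} = (K \<inter> L) +> l"
proof -
  interpret K: additive_subgroup K G by (rule K)
  interpret L: additive_subgroup L G by (rule L)
  have lc: "l \<in> carrier G" using l by simp
  have "l' \<in> (K \<inter> L) +> l" if "l' \<in> L" "u \<ominus> l' \<in> K" for l'
  proof -
    have l'c: "l' \<in> carrier G" using that by simp
    have "l' \<ominus> l = (u \<ominus> l) \<ominus> (u \<ominus> l')"
      using u lc l'c by (simp add: a_minus_def minus_add a_ac) (simp add: a_lcomm[of u] r_neg)
    then have "l' \<ominus> l \<in> K"
      using that ul by (simp add: a_minus_def)
    moreover have "l' \<ominus> l \<in> L"
      using that l by (simp add: a_minus_def)
    moreover have "l' = (l' \<ominus> l) \<oplus> l"
      using lc l'c by (simp add: a_minus_def a_assoc l_neg)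
    ultimately show ?thesis
      using lc by (metis IntI a_rcosI inf.coboundedI1 K.a_subset)
  qed
  moreover have "h \<oplus> l \<in> L \<and> u \<ominus> (h \<oplus> l) \<in> K" if "h \<in> K" "h \<in> L" for h
  proof -
    have "u \<ominus> (h \<oplus> l) = (u \<ominus> l) \<ominus> h"
      using that u lc by (simp add: a_minus_def minus_add a_ac)
    then show ?thesis
      using that l ul by (simp add: a_minus_def)
  qed
  ultimately show ?thesis
    by (auto simp: a_r_coset_def')
qed

lemma image_a_r_coset:
  fixes G (structure) and H (structure)
  assumes "\<And>a b. \<lbrakk>a \<in> carrier G; b \<in> carrier G\<rbrakk> \<Longrightarrow> f (a \<oplus> b) = f a \<oplus>\<^bsub>H\<^esub> f b"
    and "S \<subseteq> carrier G" and "x \<in> carrier G"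
  shows "f ` (S +> x) = f ` S +>\<^bsub>H\<^esub> f x"
  using assms unfolding a_r_coset_def' by (auto simp: subset_iff)
    (metis (mono_tags, lifting) UN_iff image_iff singletonI)

text \<open>dsum_carrier is deliberately not a simp rule: rewriting carrier (dsum E D) to a product
  would hide it from the closure rules of the module dsum E D.\<close>

lemma dsum_carrier: "carrier (dsum E D) = carrier E \<times> carrier D"
  and dsum_zero [simp]: "\<zero>\<^bsub>dsum E D\<^esub> = (\<zero>\<^bsub>E\<^esub>, \<zero>\<^bsub>D\<^esub>)"
  and dsum_add: "u \<oplus>\<^bsub>dsum E D\<^esub> v = (fst u \<oplus>\<^bsub>E\<^esub> fst v, snd u \<oplus>\<^bsub>D\<^esub> snd v)"
  and dsum_smult: "r \<odot>\<^bsub>dsum E D\<^esub> u = (r \<odot>\<^bsub>E\<^esub> fst u, r \<odot>\<^bsub>D\<^esub> snd u)"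
  by (simp_all add: dsum_def split: prod.split)

lemma lmodule_dsum:
  assumes "lmodule R E" and "lmodule R D"
  shows "lmodule R (dsum E D)"
proof -
  interpret E: lmodule R E by fact
  interpret D: lmodule R D by fact
  have "abelian_group (dsum E D)"
  proof (rule abelian_groupI)
    fix u assume "u \<in> carrier (dsum E D)"
    then show "\<exists>v\<in>carrier (dsum E D). v \<oplus>\<^bsub>dsum E D\<^esub> u = \<zero>\<^bsub>dsum E D\<^esub>"
      by (intro bexI[of _ "(\<ominus>\<^bsub>E\<^esub> fst u, \<ominus>\<^bsub>D\<^esub> snd u)"])
        (auto simp: dsum_carrier dsum_add E.l_neg D.l_neg)
  qed (auto simp: dsum_carrier dsum_add E.a_ac D.a_ac)
  then show ?thesis
    by (auto simp: dsum_carrier dsum_add dsum_smult lmodule_def lmodule_axioms_def E.ring_axioms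
        E.smult_l_distr D.smult_l_distr E.smult_r_distr D.smult_r_distr
        E.smult_assoc1 D.smult_assoc1)
qed

definition coset_graph :: "('a, 'b) module \<Rightarrow> ('b \<Rightarrow> 'c set) \<Rightarrow> ('b \<times> 'c) set" where
  "coset_graph E f = {(x, d). x \<in> carrier E \<and> d \<in> f x}"

text \<open>For u = k + l with k \<in> K and l \<in> L: the class of the D-component of l modulo
  snd ` (K \<inter> L), independent of the decomposition (snd_summand_coset_eq).\<close>

definition snd_summand_coset ::
    "('a, 'b) module \<Rightarrow> ('a, 'c) module \<Rightarrow> ('b \<times> 'c) set \<Rightarrow> ('b \<times> 'c) set \<Rightarrow> 'b \<times> 'c \<Rightarrow> 'c set"
  where "snd_summand_coset E D K L u = snd ` {l \<in> L. u \<ominus>\<^bsub>dsum E D\<^esub> l \<in> K}"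

locale lmodule_pair = E: lmodule R E + D: lmodule R D
  for R :: "('a, 'r) ring_scheme" and E :: "('a, 'b) module" and D :: "('a, 'c) module"

sublocale lmodule_pair \<subseteq> ED: lmodule R "dsum E D"
  by (rule lmodule_dsum) unfold_locales

context lmodule_pair
begin

lemma dsum_a_inv:
  "u \<in> carrier (dsum E D) \<Longrightarrow> \<ominus>\<^bsub>dsum E D\<^esub> u = (\<ominus>\<^bsub>E\<^esub> fst u, \<ominus>\<^bsub>D\<^esub> snd u)"
  by (rule ED.minus_equality) (auto simp: dsum_carrier dsum_add E.l_neg D.l_neg)

lemma submodule_snd_image:
  assumes "submodule H R (dsum E D)"
  shows "submodule (snd ` H) R D"
proof -
  interpret H: submodule H R "dsum E D" by fact
  show ?thesis
  proof (rule D.submoduleI)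
    show "snd ` H \<subseteq> carrier D"
      using H.subset by (auto simp: dsum_carrier)
    show "\<zero>\<^bsub>D\<^esub> \<in> snd ` H"
      using H.one_closed by (metis dsum_zero monoid.simps(2) image_eqI snd_conv)
  next
    fix a b assume "a \<in> snd ` H" and "b \<in> snd ` H"
    then obtain u v where "u \<in> H" "v \<in> H" "a = snd u" "b = snd v"
      by blast
    moreover have "u \<oplus>\<^bsub>dsum E D\<^esub> v \<in> H"
      using H.m_closed \<open>u \<in> H\<close> \<open>v \<in> H\<close> by simp
    ultimately show "a \<oplus>\<^bsub>D\<^esub> b \<in> snd ` H"
      by (metis dsum_add image_eqI snd_conv)
  next
    fix r a assume "r \<in> carrier R" and "a \<in> snd ` H"
    then obtain u where "u \<in> H" "a = snd u"
      by blast
    moreover have "r \<odot>\<^bsub>dsum E D\<^esub> u \<in> H"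
      using H.smult_closed \<open>r \<in> carrier R\<close> \<open>u \<in> H\<close> by simp
    ultimately show "r \<odot>\<^bsub>D\<^esub> a \<in> snd ` H"
      by (metis dsum_smult image_eqI snd_conv)
  qed
qed

lemma submodule_fst_slice:
  assumes "submodule H R (dsum E D)"
  shows "submodule {x \<in> carrier E. (x, \<zero>\<^bsub>D\<^esub>) \<in> H} R E"
proof -
  interpret H: submodule H R "dsum E D" by fact
  show ?thesis
  proof (rule E.submoduleI)
    show "\<zero>\<^bsub>E\<^esub> \<in> {x \<in> carrier E. (x, \<zero>\<^bsub>D\<^esub>) \<in> H}"
      using H.one_closed by simp
  next
    fix a b assume "a \<in> {x \<in> carrier E. (x, \<zero>\<^bsub>D\<^esub>) \<in> H}" "b \<in> {x \<in> carrier E. (x, \<zero>\<^bsub>D\<^esub>) \<in> H}"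
    then show "a \<oplus>\<^bsub>E\<^esub> b \<in> {x \<in> carrier E. (x, \<zero>\<^bsub>D\<^esub>) \<in> H}"
      using H.m_closed[of "(a, \<zero>\<^bsub>D\<^esub>)" "(b, \<zero>\<^bsub>D\<^esub>)"] by (simp add: dsum_carrier dsum_add)
  next
    fix r a assume "r \<in> carrier R" "a \<in> {x \<in> carrier E. (x, \<zero>\<^bsub>D\<^esub>) \<in> H}"
    then show "r \<odot>\<^bsub>E\<^esub> a \<in> {x \<in> carrier E. (x, \<zero>\<^bsub>D\<^esub>) \<in> H}"
      using H.smult_closed[of r "(a, \<zero>\<^bsub>D\<^esub>)"] by (simp add: dsum_carrier dsum_smult)
  qed (auto simp: dsum_carrier)
qed

lemma submodule_zero_times_carrier: "submodule ({\<zero>\<^bsub>E\<^esub>} \<times> carrier D) R (dsum E D)"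
  by (rule ED.submoduleI) (auto simp: dsum_carrier dsum_add dsum_smult)

lemma simple_meet_submodule_trivial:
  assumes "simple_module R E" and "submodule H R (dsum E D)"
    and "\<not> (\<lambda>x. (x, \<zero>\<^bsub>D\<^esub>)) ` carrier E \<subseteq> H"
    and "x \<in> carrier E" and "(x, \<zero>\<^bsub>D\<^esub>) \<in> H"
  shows "x = \<zero>\<^bsub>E\<^esub>"
proof -
  have "{x \<in> carrier E. (x, \<zero>\<^bsub>D\<^esub>) \<in> H} \<noteq> carrier E"
    using assms(3) by auto
  then have "{x \<in> carrier E. (x, \<zero>\<^bsub>D\<^esub>) \<in> H} = {\<zero>\<^bsub>E\<^esub>}"
    using assms(1) submodule_fst_slice[OF assms(2)] by (auto simp: simple_module_def)
  then show ?thesis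
    using assms(4,5) by auto
qed

context
  fixes A f
  assumes A: "submodule A R D" and f: "lin_hom R E (quot_module D A) f"
begin

lemma lin_hom_quot_closed: "x \<in> carrier E \<Longrightarrow> f x \<in> carrier (quot_module D A)"
  using f by (auto simp: lin_hom_def)

lemma lin_hom_quot_eq_rcos: "\<lbrakk>x \<in> carrier E; d \<in> f x\<rbrakk> \<Longrightarrow> f x = A +>\<^bsub>D\<^esub> d"
  by (rule D.quot_module_elem_eq_rcos[OF A lin_hom_quot_closed])

lemma lin_hom_quot_zero: "f \<zero>\<^bsub>E\<^esub> = A"
proof -
  obtain d where d: "d \<in> carrier D" "f \<zero>\<^bsub>E\<^esub> = A +>\<^bsub>D\<^esub> d"
    using D.quot_module_elemE[OF A lin_hom_quot_closed[OF E.zero_closed]] by blast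
  have "f \<zero>\<^bsub>E\<^esub> = f (\<zero>\<^bsub>R\<^esub> \<odot>\<^bsub>E\<^esub> \<zero>\<^bsub>E\<^esub>)"
    by simp
  also have "\<dots> = \<zero>\<^bsub>R\<^esub> \<odot>\<^bsub>quot_module D A\<^esub> f \<zero>\<^bsub>E\<^esub>"
    using f E.zero_closed E.R.zero_closed unfolding lin_hom_def by blast
  also have "\<dots> = A"
    using d D.quot_module_smult_rcos[OF A] D.rcos_zero[OF A] by simp
  finally show ?thesis .
qed

lemma lin_hom_quot_add_mem:
  assumes "x \<in> carrier E" "y \<in> carrier E" "d \<in> f x" "e \<in> f y"
  shows "d \<oplus>\<^bsub>D\<^esub> e \<in> f (x \<oplus>\<^bsub>E\<^esub> y)"
proof -
  have dc: "d \<in> carrier D" and ec: "e \<in> carrier D"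
    using assms D.quot_module_elem_subset[OF A] lin_hom_quot_closed by blast+
  have "f (x \<oplus>\<^bsub>E\<^esub> y) = f x \<oplus>\<^bsub>quot_module D A\<^esub> f y"
    using f assms by (simp add: lin_hom_def)
  also have "\<dots> = A +>\<^bsub>D\<^esub> (d \<oplus>\<^bsub>D\<^esub> e)"
    using assms dc ec lin_hom_quot_eq_rcos[of x d] lin_hom_quot_eq_rcos[of y e]
      D.quot_module_add_rcos[OF A] by simp
  finally show ?thesis
    using dc ec D.rcos_self[OF A] by simp
qed

lemma lin_hom_quot_smult_mem:
  assumes "r \<in> carrier R" "x \<in> carrier E" "d \<in> f x"
  shows "r \<odot>\<^bsub>D\<^esub> d \<in> f (r \<odot>\<^bsub>E\<^esub> x)"
proof -
  have dc: "d \<in> carrier D"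
    using assms D.quot_module_elem_subset[OF A] lin_hom_quot_closed by blast
  have "f (r \<odot>\<^bsub>E\<^esub> x) = r \<odot>\<^bsub>quot_module D A\<^esub> f x"
    using f assms by (simp add: lin_hom_def)
  also have "\<dots> = A +>\<^bsub>D\<^esub> (r \<odot>\<^bsub>D\<^esub> d)"
    using assms dc lin_hom_quot_eq_rcos[of x d] D.quot_module_smult_rcos[OF A] by simp
  finally show ?thesis
    using assms dc D.rcos_self[OF A] by simp
qed

lemma coset_graph_submodule: "submodule (coset_graph E f) R (dsum E D)"
proof (rule ED.submoduleI)
  show "coset_graph E f \<subseteq> carrier (dsum E D)"
    using D.quot_module_elem_subset[OF A] lin_hom_quot_closed
    by (auto simp: coset_graph_def dsum_carrier)
  show "\<zero>\<^bsub>dsum E D\<^esub> \<in> coset_graph E f"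
    using lin_hom_quot_zero D.rcos_self[OF A D.zero_closed]
    by (simp add: coset_graph_def D.rcos_zero[OF A])
qed (auto simp: coset_graph_def dsum_add dsum_smult intro: lin_hom_quot_add_mem lin_hom_quot_smult_mem)

lemma mem_coset_graph_iff:
  "x \<in> carrier E \<Longrightarrow> (x, \<zero>\<^bsub>D\<^esub>) \<in> coset_graph E f \<longleftrightarrow> f x = A"
  using D.quot_module_elem_eq_zero_iff[OF A lin_hom_quot_closed] by (simp add: coset_graph_def)

lemma first_summand_subset_coset_graph_sum:
  "(\<lambda>x. (x, \<zero>\<^bsub>D\<^esub>)) ` carrier E
     \<subseteq> submod_sum (dsum E D) (coset_graph E f) ({\<zero>\<^bsub>E\<^esub>} \<times> carrier D)"
proof clarify
  fix x assume x: "x \<in> carrier E"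
  then obtain d where d: "d \<in> carrier D" "f x = A +>\<^bsub>D\<^esub> d"
    using D.quot_module_elemE[OF A lin_hom_quot_closed] by blast
  then have "(x, d) \<in> coset_graph E f"
    using x D.rcos_self[OF A] by (simp add: coset_graph_def)
  moreover have "(x, \<zero>\<^bsub>D\<^esub>) = (x, d) \<oplus>\<^bsub>dsum E D\<^esub> (\<zero>\<^bsub>E\<^esub>, \<ominus>\<^bsub>D\<^esub> d)"
    using x d by (simp add: dsum_add D.r_neg)
  ultimately show "(x, \<zero>\<^bsub>D\<^esub>) \<in> submod_sum (dsum E D) (coset_graph E f) ({\<zero>\<^bsub>E\<^esub>} \<times> carrier D)"
    using d unfolding submod_sum_def by blast
qed

end

context
  fixes K L
  assumes K: "submodule K R (dsum E D)" and L: "submodule L R (dsum E D)"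
begin

interpretation K: submodule K R "dsum E D" by (rule K)
interpretation L: submodule L R "dsum E D" by (rule L)

lemma submodule_snd_Int: "submodule (snd ` (K \<inter> L)) R D"
  by (intro submodule_snd_image ED.submodule_Int K L)

lemma snd_summand_coset_eq:
  assumes "u \<in> carrier (dsum E D)" and "l \<in> L" and "u \<ominus>\<^bsub>dsum E D\<^esub> l \<in> K"
  shows "snd_summand_coset E D K L u = snd ` (K \<inter> L) +>\<^bsub>D\<^esub> snd l"
proof -
  have "{l' \<in> L. u \<ominus>\<^bsub>dsum E D\<^esub> l' \<in> K} = (K \<inter> L) +>\<^bsub>dsum E D\<^esub> l"
    by (rule ED.summands_eq_rcos[OF ED.submodule_additive_subgroup[OF K]
          ED.submodule_additive_subgroup[OF L] assms])
  moreover have "snd ` ((K \<inter> L) +>\<^bsub>dsum E D\<^esub> l) = snd ` (K \<inter> L) +>\<^bsub>D\<^esub> snd l"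
    using assms(2) ED.submodule_subset[OF K] ED.submodule_subset[OF L] by (intro image_a_r_coset) (auto simp: dsum_add)
  ultimately show ?thesis
    unfolding snd_summand_coset_def by simp
qed

lemma snd_summand_coset_closed:
  assumes "u \<in> submod_sum (dsum E D) K L"
  shows "snd_summand_coset E D K L u \<in> carrier (quot_module D (snd ` (K \<inter> L)))"
proof -
  obtain l where l: "l \<in> L" "u \<ominus>\<^bsub>dsum E D\<^esub> l \<in> K"
    by (rule ED.submod_sumE[OF assms K L])
  moreover have "u \<in> carrier (dsum E D)" and "snd l \<in> carrier D"
    using assms ED.submod_sum_subset[OF K L] l ED.submodule_subset[OF L] by (auto simp: dsum_carrier)
  ultimately show ?thesis
    using D.a_rcosetsI[OF D.submodule_subset[OF submodule_snd_Int]]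
    by (simp only: snd_summand_coset_eq[of u l] quot_module_carrier)
qed

lemma snd_summand_coset_add:
  assumes u: "u \<in> submod_sum (dsum E D) K L" and v: "v \<in> submod_sum (dsum E D) K L"
  shows "snd_summand_coset E D K L (u \<oplus>\<^bsub>dsum E D\<^esub> v)
    = snd_summand_coset E D K L u \<oplus>\<^bsub>quot_module D (snd ` (K \<inter> L))\<^esub> snd_summand_coset E D K L v"
proof -
  obtain l where l: "l \<in> L" "u \<ominus>\<^bsub>dsum E D\<^esub> l \<in> K"
    by (rule ED.submod_sumE[OF u K L])
  obtain l' where l': "l' \<in> L" "v \<ominus>\<^bsub>dsum E D\<^esub> l' \<in> K"
    by (rule ED.submod_sumE[OF v K L])
  have c: "u \<in> carrier (dsum E D)" "v \<in> carrier (dsum E D)"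
    "l \<in> carrier (dsum E D)" "l' \<in> carrier (dsum E D)"
    using u v ED.submod_sum_subset[OF K L] l l' ED.submodule_subset[OF L] by auto
  have "(u \<oplus>\<^bsub>dsum E D\<^esub> v) \<ominus>\<^bsub>dsum E D\<^esub> (l \<oplus>\<^bsub>dsum E D\<^esub> l')
      = (u \<ominus>\<^bsub>dsum E D\<^esub> l) \<oplus>\<^bsub>dsum E D\<^esub> (v \<ominus>\<^bsub>dsum E D\<^esub> l')"
    using c by (simp add: a_minus_def ED.minus_add ED.a_ac)
  then have "(u \<oplus>\<^bsub>dsum E D\<^esub> v) \<ominus>\<^bsub>dsum E D\<^esub> (l \<oplus>\<^bsub>dsum E D\<^esub> l') \<in> K"
    using l l' K.m_closed by simp
  moreover have "l \<oplus>\<^bsub>dsum E D\<^esub> l' \<in> L"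
    using l l' L.m_closed by simp
  ultimately have "snd_summand_coset E D K L (u \<oplus>\<^bsub>dsum E D\<^esub> v)
      = snd ` (K \<inter> L) +>\<^bsub>D\<^esub> snd (l \<oplus>\<^bsub>dsum E D\<^esub> l')"
    using c by (intro snd_summand_coset_eq) auto
  also have "\<dots> = snd ` (K \<inter> L) +>\<^bsub>D\<^esub> (snd l \<oplus>\<^bsub>D\<^esub> snd l')"
    by (simp add: dsum_add)
  also have "\<dots> = snd_summand_coset E D K L u \<oplus>\<^bsub>quot_module D (snd ` (K \<inter> L))\<^esub> snd_summand_coset E D K L v"
    using c by (simp add: snd_summand_coset_eq[OF c(1) l] snd_summand_coset_eq[OF c(2) l']
        D.quot_module_add_rcos[OF submodule_snd_Int] dsum_carrier mem_Times_iff)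
  finally show ?thesis .
qed

lemma snd_summand_coset_smult:
  assumes r: "r \<in> carrier R" and u: "u \<in> submod_sum (dsum E D) K L"
  shows "snd_summand_coset E D K L (r \<odot>\<^bsub>dsum E D\<^esub> u)
    = r \<odot>\<^bsub>quot_module D (snd ` (K \<inter> L))\<^esub> snd_summand_coset E D K L u"
proof -
  obtain l where l: "l \<in> L" "u \<ominus>\<^bsub>dsum E D\<^esub> l \<in> K"
    by (rule ED.submod_sumE[OF u K L])
  have c: "u \<in> carrier (dsum E D)" "l \<in> carrier (dsum E D)"
    using u ED.submod_sum_subset[OF K L] l ED.submodule_subset[OF L] by auto
  have "r \<odot>\<^bsub>dsum E D\<^esub> u \<ominus>\<^bsub>dsum E D\<^esub> r \<odot>\<^bsub>dsum E D\<^esub> l = r \<odot>\<^bsub>dsum E D\<^esub> (u \<ominus>\<^bsub>dsum E D\<^esub> l)"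
    using r c by (simp add: a_minus_def ED.smult_r_distr ED.smult_r_minus)
  then have "r \<odot>\<^bsub>dsum E D\<^esub> u \<ominus>\<^bsub>dsum E D\<^esub> r \<odot>\<^bsub>dsum E D\<^esub> l \<in> K"
    using r l K.smult_closed by simp
  then have "snd_summand_coset E D K L (r \<odot>\<^bsub>dsum E D\<^esub> u)
      = snd ` (K \<inter> L) +>\<^bsub>D\<^esub> snd (r \<odot>\<^bsub>dsum E D\<^esub> l)"
    using r c l by (intro snd_summand_coset_eq) auto
  also have "\<dots> = snd ` (K \<inter> L) +>\<^bsub>D\<^esub> (r \<odot>\<^bsub>D\<^esub> snd l)"
    by (simp add: dsum_smult)
  also have "\<dots> = r \<odot>\<^bsub>quot_module D (snd ` (K \<inter> L))\<^esub> snd_summand_coset E D K L u"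
    using r c by (simp add: snd_summand_coset_eq[OF c(1) l] D.quot_module_smult_rcos[OF submodule_snd_Int]
        dsum_carrier mem_Times_iff)
  finally show ?thesis .
qed

lemma lin_hom_snd_summand_coset:
  assumes cover: "(\<lambda>x. (x, \<zero>\<^bsub>D\<^esub>)) ` carrier E \<subseteq> submod_sum (dsum E D) K L"
  shows "lin_hom R E (quot_module D (snd ` (K \<inter> L))) (\<lambda>x. snd_summand_coset E D K L (x, \<zero>\<^bsub>D\<^esub>))"
proof -
  have mem: "(x, \<zero>\<^bsub>D\<^esub>) \<in> submod_sum (dsum E D) K L" if "x \<in> carrier E" for x
    using cover that by blast
  show ?thesis
    unfolding lin_hom_def
  proof (intro conjI ballI funcsetI)
    fix x assume "x \<in> carrier E"
    then show "snd_summand_coset E D K L (x, \<zero>\<^bsub>D\<^esub>) \<in> carrier (quot_module D (snd ` (K \<inter> L)))"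
      by (intro snd_summand_coset_closed mem)
  next
    fix x y assume "x \<in> carrier E" and "y \<in> carrier E"
    from snd_summand_coset_add[OF mem[OF this(1)] mem[OF this(2)]]
    show "snd_summand_coset E D K L (x \<oplus>\<^bsub>E\<^esub> y, \<zero>\<^bsub>D\<^esub>)
      = snd_summand_coset E D K L (x, \<zero>\<^bsub>D\<^esub>) \<oplus>\<^bsub>quot_module D (snd ` (K \<inter> L))\<^esub>
        snd_summand_coset E D K L (y, \<zero>\<^bsub>D\<^esub>)"
      by (simp add: dsum_add)
  next
    fix r x assume r: "r \<in> carrier R" and "x \<in> carrier E"
    from snd_summand_coset_smult[OF r mem[OF this(2)]]
    show "snd_summand_coset E D K L (r \<odot>\<^bsub>E\<^esub> x, \<zero>\<^bsub>D\<^esub>)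
      = r \<odot>\<^bsub>quot_module D (snd ` (K \<inter> L))\<^esub> snd_summand_coset E D K L (x, \<zero>\<^bsub>D\<^esub>)"
      using r by (simp add: dsum_smult)
  qed
qed

lemma snd_summand_coset_eq_zero_imp_mem:
  assumes L_meet: "\<And>x. \<lbrakk>x \<in> carrier E; (x, \<zero>\<^bsub>D\<^esub>) \<in> L\<rbrakk> \<Longrightarrow> x = \<zero>\<^bsub>E\<^esub>"
    and u: "u \<in> submod_sum (dsum E D) K L"
    and zero: "snd_summand_coset E D K L u = snd ` (K \<inter> L)"
  shows "u \<in> K"
proof -
  obtain l where l: "l \<in> L" "u \<ominus>\<^bsub>dsum E D\<^esub> l \<in> K"
    by (rule ED.submod_sumE[OF u K L])
  have uc: "u \<in> carrier (dsum E D)"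
    using ED.submod_sum_subset[OF K L] u by (rule subsetD)
  have lc: "l \<in> carrier (dsum E D)"
    using ED.submodule_subset[OF L] l(1) by (rule subsetD)
  then have "snd l \<in> snd ` (K \<inter> L) +>\<^bsub>D\<^esub> snd l"
    by (intro D.rcos_self[OF submodule_snd_Int]) (auto simp: dsum_carrier)
  then have "snd l \<in> snd ` (K \<inter> L)"
    by (simp only: zero snd_summand_coset_eq[OF uc l, symmetric])
  then obtain m where m: "m \<in> K" "m \<in> L" "snd m = snd l"
    by auto
  have mc: "m \<in> carrier (dsum E D)"
    using ED.submodule_subset[OF K] m(1) by (rule subsetD)
  define e where "e = fst (l \<ominus>\<^bsub>dsum E D\<^esub> m)"
  have "snd (l \<ominus>\<^bsub>dsum E D\<^esub> m) = \<zero>\<^bsub>D\<^esub>"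
    using lc mc m(3) by (auto simp: a_minus_def dsum_carrier dsum_add dsum_a_inv D.r_neg)
  then have lm: "l \<ominus>\<^bsub>dsum E D\<^esub> m = (e, \<zero>\<^bsub>D\<^esub>)"
    by (simp add: e_def prod_eq_iff)
  have "e = \<zero>\<^bsub>E\<^esub>"
  proof (rule L_meet)
    show "e \<in> carrier E"
      using ED.minus_closed[OF lc mc] lm by (simp add: dsum_carrier)
    show "(e, \<zero>\<^bsub>D\<^esub>) \<in> L"
      using ED.submodule_minus_closed[OF L l(1) m(2)] by (simp only: lm)
  qed
  have "l = (l \<ominus>\<^bsub>dsum E D\<^esub> m) \<oplus>\<^bsub>dsum E D\<^esub> m"
    using lc mc by (simp add: a_minus_def ED.a_assoc ED.l_neg del: dsum_zero)
  also have "\<dots> = m"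
    using mc by (simp add: lm \<open>e = \<zero>\<^bsub>E\<^esub>\<close> flip: dsum_zero)
  finally have "l \<in> K"
    using m(1) by simp
  moreover have "u = (u \<ominus>\<^bsub>dsum E D\<^esub> l) \<oplus>\<^bsub>dsum E D\<^esub> l"
    using uc lc by (simp add: a_minus_def ED.a_assoc ED.l_neg del: dsum_zero)
  ultimately show ?thesis
    using l(2) K.m_closed[of "u \<ominus>\<^bsub>dsum E D\<^esub> l" l] by simp
qed

end

lemma strongly_hollow_imp_not_simple_in_sigma:
  assumes hollow: "strongly_hollow R (dsum E D) ((\<lambda>x. (x, \<zero>\<^bsub>D\<^esub>)) ` carrier E)"
  shows "\<not> simple_in_sigma R D E"
proof
  let ?E0 = "(\<lambda>x. (x, \<zero>\<^bsub>D\<^esub>)) ` carrier E"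
  assume "simple_in_sigma R D E"
  then obtain A f x where A: "submodule A R D" and f: "lin_hom R E (quot_module D A) f"
    and x: "x \<in> carrier E" and fx: "f x \<noteq> A"
    unfolding simple_in_sigma_def by auto
  have x0: "(x, \<zero>\<^bsub>D\<^esub>) \<in> ?E0"
    using x by (rule imageI)
  have "?E0 \<subseteq> coset_graph E f \<or> ?E0 \<subseteq> {\<zero>\<^bsub>E\<^esub>} \<times> carrier D"
    using hollow coset_graph_submodule[OF A f] submodule_zero_times_carrier
      first_summand_subset_coset_graph_sum[OF A f]
    unfolding strongly_hollow_def by blast
  then show False
  proof
    assume "?E0 \<subseteq> coset_graph E f"
    then show False
      using x0 x fx mem_coset_graph_iff[OF A f] by blast
  next
    assume "?E0 \<subseteq> {\<zero>\<^bsub>E\<^esub>} \<times> carrier D"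
    then have "x = \<zero>\<^bsub>E\<^esub>"
      using x0 by blast
    then show False
      using fx lin_hom_quot_zero[OF A f] by simp
  qed
qed

lemma not_simple_in_sigma_imp_strongly_hollow:
  assumes simple: "simple_module R E" and not_sigma: "\<not> simple_in_sigma R D E"
  shows "strongly_hollow R (dsum E D) ((\<lambda>x. (x, \<zero>\<^bsub>D\<^esub>)) ` carrier E)"
  unfolding strongly_hollow_def
proof (intro allI impI)
  let ?E0 = "(\<lambda>x. (x, \<zero>\<^bsub>D\<^esub>)) ` carrier E"
  fix K L assume K: "submodule K R (dsum E D)" and L: "submodule L R (dsum E D)"
    and cover: "?E0 \<subseteq> submod_sum (dsum E D) K L"
  show "?E0 \<subseteq> K \<or> ?E0 \<subseteq> L"
  proof (rule ccontr)
    assume "\<not> (?E0 \<subseteq> K \<or> ?E0 \<subseteq> L)"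
    then obtain x where x: "x \<in> carrier E" "(x, \<zero>\<^bsub>D\<^esub>) \<notin> K" and L_big: "\<not> ?E0 \<subseteq> L"
      by blast
    have "(x, \<zero>\<^bsub>D\<^esub>) \<in> submod_sum (dsum E D) K L"
      using cover x by blast
    then have "snd_summand_coset E D K L (x, \<zero>\<^bsub>D\<^esub>) \<noteq> snd ` (K \<inter> L)"
      using x(2) snd_summand_coset_eq_zero_imp_mem[OF K L
          simple_meet_submodule_trivial[OF simple L L_big]] by blast
    then have "simple_in_sigma R D E"
      unfolding simple_in_sigma_def quot_module_zero
      using x(1) submodule_snd_Int[OF K L] lin_hom_snd_summand_coset[OF K L cover]
      by (intro exI[of _ "snd ` (K \<inter> L)"] exI[of _ "\<lambda>x. snd_summand_coset E D K L (x, \<zero>\<^bsub>D\<^esub>)"])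
        blast
    with not_sigma show False ..
  qed
qed

end

theorem lemma2p16:
  fixes R :: "('a, 'r) ring_scheme" and E :: "('a, 'b) module" and D :: "('a, 'c) module"
  assumes "ring R" and "simple_module R E" and "left_module R D"
  shows "strongly_hollow R (dsum E D) ((\<lambda>x. (x, \<zero>\<^bsub>D\<^esub>)) ` carrier E)
           \<longleftrightarrow> \<not> simple_in_sigma R D E"
proof -
  interpret lmodule_pair R E D
    using assms(2,3) by (simp add: lmodule_pair_def simple_module_def left_module_imp_lmodule)
  show ?thesis
    using strongly_hollow_imp_not_simple_in_sigma not_simple_in_sigma_imp_strongly_hollow[OF assms(2)]
    by blast
qed

end
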